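(* Fix an integer base $B\ge 2$ and an integer $k\ge 0$. Assume Dickson's conjecture holds. Then for every positive integer $t$ there exists a positive integer $N$ such that $N, N+1, \ldots, N+t-1$ are all $k$-frugal.
   Context: For a positive integer $n$, $\delta(n)$ is the number of digits of $n$ in base $B$, i.e. $\delta(n)=k$ iff $B^{k-1}\le n<B^k$. Define $\delta'(1)=0$ and $\delta'(a)=\delta(a)$ for $a>1$. If $n=\prod_{i} p_i^{a_i}$ is the prime power factorisation, set $\phi(n)=\sum_i \big(\delta(p_i)+\delta'(a_i)\big)$ (with $\phi(1)=0$), and $h(n)=\delta(n)-\phi(n)$. A positive integer $n$ is $k$-frugal if $h(n)\ge k$ (for $k=0$ this means economical). Dickson's conjecture: for any finite family of linear functions $f_i(x)=a_i x+b_i$ ($i=1,\dots,s$) with integers $a_i\ge1$, $b_i$, if there is no integer $m>1$ dividing $f_1(x)f_2(x)\cdots f_s(x)$ for every integer $x$, then there are infinitely many positive integers $x$ for which $f_1(x),\dots,f_s(x)$ are all prime. *)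

theory Defs
  imports "HOL-Computational_Algebra.Primes"
begin

definition num_digits :: "nat \<Rightarrow> nat \<Rightarrow> nat" where
  "num_digits B n = (LEAST k. n < B ^ k)"

definition num_digits' :: "nat \<Rightarrow> nat \<Rightarrow> nat" where
  "num_digits' B a = (if a = 1 then 0 else num_digits B a)"

definition fact_len :: "nat \<Rightarrow> nat \<Rightarrow> nat" where
  "fact_len B n = (\<Sum>p\<in>prime_factors n. num_digits B p + num_digits' B (multiplicity p n))"

definition h_frugal :: "nat \<Rightarrow> nat \<Rightarrow> int" where
  "h_frugal B n = int (num_digits B n) - int (fact_len B n)"

definition k_frugal :: "nat \<Rightarrow> int \<Rightarrow> nat \<Rightarrow> bool" where
  "k_frugal B k n \<longleftrightarrow> n > 0 \<and> h_frugal B n \<ge> k"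

text \<open>Dickson's conjecture; a family of linear functions a x + b is a list of pairs (a, b).\<close>
definition dickson_conjecture :: bool where
  "dickson_conjecture \<longleftrightarrow>
    (\<forall>fs :: (int \<times> int) list.
       (\<forall>(a, b) \<in> set fs. a \<ge> 1) \<longrightarrow>
       \<not> (\<exists>m::int. m > 1 \<and> (\<forall>x::int. m dvd (\<Prod>(a, b) \<leftarrow> fs. a * x + b))) \<longrightarrow>
       infinite {x::int. x > 0 \<and> (\<forall>(a, b) \<in> set fs. prime (a * x + b))})"

end

theory Submission
  imports Defs "HOL-Library.Infinite_Set" "HOL-Number_Theory.Cong"
begin

text \<open>Choose distinct primes q_1, ..., q_t > t + B and a huge exponent e = B^s. By the Chinese
  remainder theorem there is N0 with (t!)^2 | N0 and q_j^e | N0 + j; with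
  K = (t!)^2 * prod_l q_l^e every N0 + K y + j then factors as j * q_j^e * (a_j y + b_j).
  The square of t! keeps N0 / j divisible by every prime p \<le> t, so that together with the
  choice of the q_j the t linear forms a_j y + b_j have no fixed prime divisor, and Dickson's
  conjecture makes them all prime for some large y. In base B the factor q_j^e contributes at
  least e digits to N0 + K y + j but only digits(q_j) + digits(e) to its factorisation, while
  the prime a_j y + b_j costs the same on both sides; since digits(e) = s + 1 is tiny compared
  with e = B^s, large s beats any k.\<close>

lemma less_power_num_digits:
  assumes "B \<ge> 2"
  shows "n < B ^ num_digits B n"
proof -
  have "n < 2 ^ n" by (rule less_exp)
  also have "(2::nat) ^ n \<le> B ^ n" using assms by (intro power_mono) auto
  finally show ?thesis unfolding num_digits_def by (rule LeastI)
qed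

lemma num_digits_le: "n < B ^ m \<Longrightarrow> num_digits B n \<le> m"
  unfolding num_digits_def by (rule Least_le)

lemma less_num_digits:
  assumes "B \<ge> 2" "B ^ m \<le> n"
  shows "m < num_digits B n"
proof (rule ccontr)
  assume "\<not> m < num_digits B n"
  then have "B ^ num_digits B n \<le> B ^ m" using assms(1) by (intro power_increasing) auto
  with less_power_num_digits[OF assms(1), of n] assms(2) show False by linarith
qed

lemma power_num_digits_minus_one_le:
  assumes "B \<ge> 2" "n > 0"
  shows "B ^ (num_digits B n - 1) \<le> n"
proof (rule ccontr)
  assume "\<not> ?thesis"
  then have "num_digits B n \<le> num_digits B n - 1" by (intro num_digits_le) simp
  then have "num_digits B n = 0" by simp
  with less_power_num_digits[OF assms(1), of n] assms(2) show False by simp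
qed

lemma num_digits_mult_ge:
  assumes "B \<ge> 2" "B ^ e \<le> m" "n > 0"
  shows "e + num_digits B n \<le> num_digits B (m * n)"
proof -
  have "B ^ (e + (num_digits B n - 1)) \<le> m * n"
    using power_num_digits_minus_one_le[OF assms(1,3)] assms(2) by (simp add: power_add mult_mono)
  then have "e + (num_digits B n - 1) < num_digits B (m * n)"
    by (rule less_num_digits[OF assms(1)])
  moreover have "0 < num_digits B n"
    using less_num_digits[OF assms(1), of 0 n] assms(3) by simp
  ultimately show ?thesis by linarith
qed

lemma num_digits_base_power_le:
  assumes "B \<ge> 2"
  shows "s + num_digits B (B ^ s) \<le> B ^ s + 1"
proof -
  have "num_digits B (B ^ s) \<le> s + 1" using assms by (intro num_digits_le) simp
  moreover have "2 * s \<le> (2::nat) ^ s"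
  proof (induction s)
    case (Suc s)
    then show ?case by (cases s) auto
  qed simp
  moreover have "(2::nat) ^ s \<le> B ^ s" using assms by (intro power_mono) auto
  ultimately show ?thesis by linarith
qed

lemma fact_len_mult:
  assumes "coprime m n" "m > 0" "n > 0"
  shows "fact_len B (m * n) = fact_len B m + fact_len B n"
proof -
  have disjoint: "prime_factors m \<inter> prime_factors n = {}"
    using assms(1) by (auto simp: in_prime_factors_iff dest: coprime_common_divisor not_prime_unit)
  have "multiplicity p (m * n) = multiplicity p m + multiplicity p n" if "prime p" for p
    using that assms(2,3) by (simp add: prime_elem_multiplicity_mult_distrib)
  moreover have "multiplicity p m = 0" if "p \<in> prime_factors n" for p
    using that disjoint assms(2) by (auto simp: prime_factors_multiplicity)
  moreover have "multiplicity p n = 0" if "p \<in> prime_factors m" for p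
    using that disjoint assms(3) by (auto simp: prime_factors_multiplicity)
  ultimately show ?thesis
    using assms(2,3) disjoint unfolding fact_len_def
    by (auto simp: prime_factors_product sum.union_disjoint in_prime_factors_iff intro!: sum.cong)
qed

lemma fact_len_prime_power:
  assumes "prime q" "e > 0"
  shows "fact_len B (q ^ e) = num_digits B q + num_digits' B e"
  using assms by (simp add: fact_len_def prime_factorization_prime_power prime_imp_prime_elem)

lemma fact_len_prime: "prime q \<Longrightarrow> fact_len B q = num_digits B q"
  using fact_len_prime_power[of q 1 B] by (simp add: num_digits'_def)

lemma h_frugal_mult_prime_power_prime_ge:
  assumes B: "B \<ge> 2" and "j > 0" and q: "prime q" "B \<le> q" "\<not> q dvd j" and "e > 0"
    and P: "prime P" "q < P" "j < P"
  shows "int e - int (fact_len B j) - int (num_digits B q) - int (num_digits B e)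
           \<le> h_frugal B (j * q ^ e * P)"
proof -
  have "\<not> P dvd j" "\<not> P dvd q"
    using P q \<open>j > 0\<close> by (auto simp: prime_gt_0_nat dest: dvd_imp_le)
  then have "\<not> P dvd j * q ^ e" using P(1) by (auto simp: prime_dvd_mult_iff dest: prime_dvd_power)
  then have "coprime (j * q ^ e) P" by (metis prime_imp_coprime P(1) coprime_commute)
  moreover have "coprime j (q ^ e)" using prime_imp_coprime[OF q(1,3)] by (simp add: coprime_commute)
  ultimately have "fact_len B (j * q ^ e * P)
      = fact_len B j + (num_digits B q + num_digits' B e) + num_digits B P"
    using \<open>j > 0\<close> \<open>e > 0\<close> q P
    by (simp add: fact_len_mult fact_len_prime_power fact_len_prime prime_gt_0_nat)
  moreover have "e + num_digits B P \<le> num_digits B (j * q ^ e * P)"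
  proof -
    have "B ^ e \<le> q ^ e" using q(2) by (rule power_mono) simp
    also have "\<dots> \<le> j * q ^ e" using \<open>j > 0\<close> by simp
    finally show ?thesis using P(1) by (intro num_digits_mult_ge[OF B]) (simp_all add: prime_gt_0_nat)
  qed
  moreover have "num_digits' B e \<le> num_digits B e" by (simp add: num_digits'_def)
  ultimately show ?thesis unfolding h_frugal_def by linarith
qed

lemma no_fixed_divisor_if_no_fixed_prime_divisor:
  fixes f :: "int \<Rightarrow> int"
  assumes "\<And>p. prime p \<Longrightarrow> \<exists>x. \<not> p dvd f x"
  shows "\<not> (\<exists>m>1. \<forall>x. m dvd f x)"
proof
  assume "\<exists>m>1. \<forall>x. m dvd f x"
  then obtain m where "m > 1" "\<forall>x. m dvd f x" by blast
  moreover obtain p where "prime p" "p dvd m"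
    using prime_divisor_exists[of m] \<open>m > 1\<close> by auto
  ultimately show False using assms dvd_trans by blast
qed

lemma dickson_ex_large_prime_values:
  fixes a b :: "nat \<Rightarrow> nat" and J :: "nat set"
  assumes dickson_conjecture and "finite J" and a_pos: "\<And>j. j \<in> J \<Longrightarrow> a j > 0"
    and admissible: "\<And>p. prime p \<Longrightarrow> \<exists>y. \<forall>j\<in>J. \<not> p dvd a j * y + b j"
  shows "\<exists>y>L. \<forall>j\<in>J. prime (a j * y + b j)"
proof -
  define fs where "fs = map (\<lambda>j. (int (a j), int (b j))) (sorted_list_of_set J)"
  have set_fs: "set fs = (\<lambda>j. (int (a j), int (b j))) ` J"
    using \<open>finite J\<close> by (simp add: fs_def)
  have prod_fs: "(\<Prod>(c, d) \<leftarrow> fs. c * x + d) = (\<Prod>j\<in>J. int (a j) * x + int (b j))" for x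
    using \<open>finite J\<close> by (simp add: fs_def o_def flip: prod.distinct_set_conv_list)
  have "\<not> (\<exists>m>1. \<forall>x. m dvd (\<Prod>(c, d) \<leftarrow> fs. c * x + d))"
  proof (rule no_fixed_divisor_if_no_fixed_prime_divisor)
    fix p :: int
    assume "prime p"
    then obtain y where y: "\<forall>j\<in>J. \<not> nat p dvd a j * y + b j"
      using admissible[of "nat p"] by auto
    have "\<not> p dvd int (a j) * int y + int (b j)" if "j \<in> J" for j
      using y that \<open>prime p\<close> prime_ge_0_int[of p]
      by (metis int_dvd_int_iff nat_0_le of_nat_add of_nat_mult)
    then have "\<not> p dvd (\<Prod>j\<in>J. int (a j) * int y + int (b j))"
      using \<open>finite J\<close> \<open>prime p\<close> by (simp add: prime_dvd_prod_iff)
    then show "\<exists>x. \<not> p dvd (\<Prod>(c, d) \<leftarrow> fs. c * x + d)"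
      unfolding prod_fs by blast
  qed
  moreover have "\<forall>(c, d) \<in> set fs. c \<ge> 1" using a_pos by (auto simp: set_fs Suc_le_eq)
  ultimately have "infinite {x. x > 0 \<and> (\<forall>(c, d) \<in> set fs. prime (c * x + d))}"
    using \<open>dickson_conjecture\<close> unfolding dickson_conjecture_def by blast
  then obtain x where x: "\<bar>x\<bar> > int L" "x > 0" "\<forall>(c, d) \<in> set fs. prime (c * x + d)"
    unfolding infinite_int_iff_unbounded by blast
  have "prime (a j * nat x + b j)" if "j \<in> J" for j
  proof -
    have "prime (int (a j) * x + int (b j))" using x(3) that by (auto simp: set_fs)
    moreover have "int (a j) * x + int (b j) = int (a j * nat x + b j)" using x(2) by simp
    ultimately show ?thesis by (metis prime_nat_int_transfer)
  qed
  moreover have "nat x > L" using x(1,2) by simp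
  ultimately show ?thesis by blast
qed

lemma ex_inj_on_primes_gt:
  fixes t c :: nat
  shows "\<exists>q :: nat \<Rightarrow> nat. inj_on q {1..t} \<and> (\<forall>j\<in>{1..t}. prime (q j) \<and> c < q j)"
proof -
  have "infinite {p. prime p \<and> c < p}"
    unfolding infinite_nat_iff_unbounded
  proof
    fix m
    obtain p where "prime p" "max m c < p" using bigger_prime[of "max m c"] by blast
    then show "\<exists>p>m. p \<in> {p. prime p \<and> c < p}" by auto
  qed
  then obtain S where S: "finite S" "card S = t" "S \<subseteq> {p. prime p \<and> c < p}"
    using infinite_arbitrarily_large by blast
  then obtain q where "bij_betw q {1..t} S" using ex_bij_betw_nat_finite_1 by blast
  then show ?thesis using S(3) by (auto simp: bij_betw_def)
qed

lemma ex_fact_square_dvd_and_prime_powers_dvd_shifts: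
  assumes q_inj: "inj_on q {1..t}" and q: "\<And>j. j \<in> {1..t} \<Longrightarrow> prime (q j) \<and> t < q j"
  shows "\<exists>N0. fact t ^ 2 dvd N0 \<and> (\<forall>j\<in>{1..t}. q j ^ e dvd N0 + j)"
proof -
  define m where "m j = (if j = 0 then fact t ^ 2 else q j ^ e)" for j :: nat
  \<comment> \<open>u j is -j modulo q j ^ e, and u 0 = 0\<close>
  define u where "u j = (q j ^ e - 1) * j" for j :: nat
  have coprime_fact: "coprime (q j) (fact t)" if "j \<in> {1..t}" for j
    using q[OF that] by (intro prime_imp_coprime) (simp_all add: prime_dvd_fact_iff)
  have coprime_q: "coprime (q i) (q j)" if "i \<in> {1..t}" "j \<in> {1..t}" "i \<noteq> j" for i j
    using q that inj_onD[OF q_inj] by (metis primes_coprime)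
  have "\<forall>i\<in>{0..t}. \<forall>j\<in>{0..t}. i \<noteq> j \<longrightarrow> coprime (m i) (m j)"
    using coprime_fact coprime_q by (auto simp: m_def coprime_commute)
  then obtain N0 where N0: "\<forall>j\<in>{0..t}. [N0 = u j] (mod m j)"
    using chinese_remainder_nat[of "{0..t}"] by blast
  have "fact t ^ 2 dvd N0"
    using N0[rule_format, of 0] by (simp add: m_def u_def cong_0_iff)
  moreover have "q j ^ e dvd N0 + j" if "j \<in> {1..t}" for j
  proof -
    have "[N0 + j = u j + j] (mod q j ^ e)"
      using N0[rule_format, of j] that by (intro cong_add cong_refl) (simp add: m_def)
    moreover have "u j + j = q j ^ e * j"
      using q[OF that] by (simp add: u_def algebra_simps prime_gt_0_nat)
    ultimately show ?thesis by (simp add: cong_0_iff cong_dvd_iff)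
  qed
  ultimately show ?thesis by blast
qed

locale prime_power_shifts =
  fixes t e N0 :: nat and q :: "nat \<Rightarrow> nat"
  assumes e_pos: "e > 0"
    and q_prime: "\<And>j. j \<in> {1..t} \<Longrightarrow> prime (q j)"
    and q_gt: "\<And>j. j \<in> {1..t} \<Longrightarrow> t < q j"
    and q_inj: "inj_on q {1..t}"
    and fact_square_dvd: "fact t ^ 2 dvd N0"
    and q_power_dvd: "\<And>j. j \<in> {1..t} \<Longrightarrow> q j ^ e dvd N0 + j"
begin

definition K :: nat where "K = fact t ^ 2 * (\<Prod>l\<in>{1..t}. q l ^ e)"

definition a :: "nat \<Rightarrow> nat" where "a j = K div (j * q j ^ e)"

definition b :: "nat \<Rightarrow> nat" where "b j = (N0 + j) div (j * q j ^ e)"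

lemma q_not_dvd: "j \<in> {1..t} \<Longrightarrow> 0 < n \<Longrightarrow> n \<le> t \<Longrightarrow> \<not> q j dvd n"
  by (meson dvd_imp_le le_trans not_le q_gt)

lemma dvd_fact_square: "j \<in> {1..t} \<Longrightarrow> j dvd fact t ^ 2"
  by (auto simp: power2_eq_square intro!: dvd_mult2 dvd_fact)

lemma dvd_K: "j \<in> {1..t} \<Longrightarrow> j * q j ^ e dvd K"
  unfolding K_def by (intro mult_dvd_mono dvd_fact_square) auto

lemma dvd_N0_shift:
  assumes "j \<in> {1..t}" shows "j * q j ^ e dvd N0 + j"
proof (rule divides_mult)
  show "j dvd N0 + j" using dvd_trans[OF dvd_fact_square[OF assms] fact_square_dvd] by simp
  show "q j ^ e dvd N0 + j" using q_power_dvd[OF assms] .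
  show "coprime j (q j ^ e)"
    using prime_imp_coprime[OF q_prime q_not_dvd, of j j] assms by (auto simp: coprime_commute)
qed

lemma K_pos: "K > 0"
  using q_prime by (auto simp: K_def prime_gt_0_nat intro!: prod_pos)

lemma K_eq_mult_a: "j \<in> {1..t} \<Longrightarrow> K = j * q j ^ e * a j"
  using dvd_K by (simp add: a_def)

lemma a_pos: "j \<in> {1..t} \<Longrightarrow> a j > 0"
  using K_eq_mult_a K_pos by (metis gr0I mult_0_right)

lemma shift_factorization:
  assumes "j \<in> {1..t}"
  shows "N0 + K * y + j = j * q j ^ e * (a j * y + b j)"
proof -
  have "N0 + j = j * q j ^ e * b j" using dvd_N0_shift[OF assms] by (simp add: b_def)
  with K_eq_mult_a[OF assms] show ?thesis by (simp add: algebra_simps)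
qed

lemma small_prime_not_dvd_b:
  assumes "prime p" "p \<le> t" "j \<in> {1..t}"
  shows "\<not> p dvd b j"
proof
  assume "p dvd b j"
  then have "j * p dvd j * (q j ^ e * b j)" by (intro mult_dvd_mono) auto
  also have "j * (q j ^ e * b j) = N0 + j"
    using shift_factorization[OF assms(3), of 0] by (simp add: ac_simps)
  finally have "j * p dvd N0 + j" .
  moreover have "j * p dvd fact t ^ 2"
    using assms prime_gt_0_nat[of p] by (auto simp: power2_eq_square intro!: mult_dvd_mono dvd_fact)
  then have "j * p dvd N0" using fact_square_dvd by (rule dvd_trans)
  ultimately have "j * p dvd j * 1" by (simp add: dvd_add_right_iff)
  then have "p dvd 1" using assms(3) by (subst (asm) nat_mult_dvd_cancel_disj) auto
  with assms(1) show False by simp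
qed

lemma q_not_dvd_other_values:
  assumes i: "i \<in> {1..t}" and j: "j \<in> {1..t}" "i \<noteq> j"
  shows "\<not> q i dvd a j * y + b j"
proof
  assume "q i dvd a j * y + b j"
  then have "q i dvd K * y + (N0 + j)"
    using shift_factorization[OF j(1), of y] by (simp add: ac_simps)
  moreover have "q i dvd K * y" using K_eq_mult_a[OF i] e_pos by (simp add: dvd_power)
  ultimately have "q i dvd N0 + j" by (simp add: dvd_add_right_iff)
  moreover have "q i dvd N0 + i" using q_power_dvd[OF i] e_pos by (meson dvd_power dvd_trans)
  ultimately have "q i dvd (N0 + j) - (N0 + i)" "q i dvd (N0 + i) - (N0 + j)"
    by (blast intro: dvd_diff_nat)+
  then show False using q_not_dvd[OF i, of "j - i"] q_not_dvd[OF i, of "i - j"] i j by fastforce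
qed

lemma q_not_dvd_a:
  assumes i: "i \<in> {1..t}"
  shows "\<not> q i dvd a i"
proof
  assume "q i dvd a i"
  define R where "R = (\<Prod>l\<in>{1..t}-{i}. q l ^ e)"
  have prod_split: "(\<Prod>l\<in>{1..t}. q l ^ e) = q i ^ e * R"
    unfolding R_def using i by (intro prod.remove) auto
  have "q i ^ e * (i * a i) = K" using K_eq_mult_a[OF i] by (simp add: ac_simps)
  also have "\<dots> = q i ^ e * (fact t ^ 2 * R)" using prod_split by (simp add: K_def ac_simps)
  finally have "i * a i = fact t ^ 2 * R" using q_prime[OF i] by (simp add: prime_gt_0_nat)
  with \<open>q i dvd a i\<close> have "q i dvd fact t ^ 2 * R" by (metis dvd_mult2 mult.commute)
  moreover have "\<not> q i dvd fact t" using q_prime[OF i] q_gt[OF i] by (simp add: prime_dvd_fact_iff)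
  moreover have "\<not> q i dvd R"
  proof
    assume "q i dvd R"
    then have "\<exists>l\<in>{1..t}-{i}. q i dvd q l ^ e"
      using q_prime[OF i] by (simp add: R_def prime_dvd_prod_iff)
    then obtain l where l: "l \<in> {1..t}-{i}" "q i dvd q l ^ e" by blast
    then have "q i dvd q l" using prime_dvd_power q_prime[OF i] by blast
    then have "q i = q l" using q_prime i l(1) by (intro primes_dvd_imp_eq) auto
    then show False using q_inj i l(1) by (auto dest: inj_onD)
  qed
  ultimately show False using q_prime[OF i] by (auto simp: prime_dvd_mult_iff dest: prime_dvd_power)
qed

lemma q_admissible:
  assumes i: "i \<in> {1..t}"
  shows "\<exists>y. \<forall>j\<in>{1..t}. \<not> q i dvd a j * y + b j"
proof -
  have "\<exists>y. \<not> q i dvd a i * y + b i"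
  proof (cases "q i dvd b i")
    case True
    then have "\<not> q i dvd a i * 1 + b i" using q_not_dvd_a[OF i] by (simp add: dvd_add_left_iff)
    then show ?thesis ..
  next
    case False
    then have "\<not> q i dvd a i * 0 + b i" by simp
    then show ?thesis ..
  qed
  then show ?thesis using q_not_dvd_other_values[OF i] by metis
qed

lemma coprime_K_admissible:
  assumes "prime p" "\<not> p dvd K"
  shows "\<exists>y. \<forall>j\<in>{1..t}. \<not> p dvd a j * y + b j"
proof -
  have "coprime K p" using prime_imp_coprime[OF assms] by (simp add: coprime_commute)
  then obtain w where w: "[K * w = 1] (mod p)" using cong_solve_coprime_nat by auto
  \<comment> \<open>N0 * (p - 1) represents -N0 modulo p\<close>
  define y where "y = w * (N0 * (p - 1))"
  have "[N0 + K * y = N0 + 1 * (N0 * (p - 1))] (mod p)"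
    unfolding y_def mult.assoc[symmetric] by (intro cong_add cong_mult w cong_refl)
  moreover have "N0 + 1 * (N0 * (p - 1)) = N0 * p"
    using prime_gt_0_nat[OF assms(1)] by (cases p) (simp_all add: algebra_simps)
  ultimately have "p dvd N0 + K * y" by (metis cong_dvd_iff dvd_triv_right)
  have "\<not> p dvd a j * y + b j" if j: "j \<in> {1..t}" for j
  proof
    assume "p dvd a j * y + b j"
    then have "p dvd (N0 + K * y) + j" using shift_factorization[OF j, of y] by simp
    with \<open>p dvd N0 + K * y\<close> have "p dvd j" by (simp add: dvd_add_right_iff)
    then show False using assms(2) K_eq_mult_a[OF j] by (metis dvd_mult2 mult.assoc)
  qed
  then show ?thesis by blast
qed

lemma admissible:
  assumes "prime p"
  shows "\<exists>y. \<forall>j\<in>{1..t}. \<not> p dvd a j * y + b j"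
proof (cases "p \<le> t")
  case True
  then show ?thesis using small_prime_not_dvd_b[OF assms] by (intro exI[of _ 0]) simp
next
  case False
  show ?thesis
  proof (cases "p dvd K")
    case True
    moreover have "\<not> p dvd fact t ^ 2"
      using assms \<open>\<not> p \<le> t\<close> prime_dvd_power[OF assms, of "fact t" 2]
      by (auto simp: prime_dvd_fact_iff)
    ultimately obtain i where i: "i \<in> {1..t}" "p dvd q i ^ e"
      using assms by (auto simp: K_def prime_dvd_mult_iff prime_dvd_prod_iff)
    then have "p = q i" using assms q_prime by (auto intro: primes_dvd_imp_eq dest: prime_dvd_power)
    then show ?thesis using q_admissible[OF i(1)] by simp
  next
    case False
    then show ?thesis by (rule coprime_K_admissible[OF assms])
  qed
qed

lemma ex_h_frugal_ge:
  assumes "dickson_conjecture" and B: "B \<ge> 2" and q_ge: "\<And>j. j \<in> {1..t} \<Longrightarrow> B \<le> q j"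
  shows "\<exists>y. \<forall>j\<in>{1..t}. int e - int (fact_len B j) - int (num_digits B (q j)) - int (num_digits B e)
                          \<le> h_frugal B (N0 + K * y + j)"
proof -
  obtain y where y: "t + (\<Sum>j\<in>{1..t}. q j) < y" and prime: "\<forall>j\<in>{1..t}. prime (a j * y + b j)"
    using dickson_ex_large_prime_values[OF assms(1) _ a_pos admissible] by blast
  have "int e - int (fact_len B j) - int (num_digits B (q j)) - int (num_digits B e)
          \<le> h_frugal B (N0 + K * y + j)" if j: "j \<in> {1..t}" for j
  proof -
    have "q j \<le> (\<Sum>j\<in>{1..t}. q j)" using j by (intro member_le_sum) auto
    moreover have "y \<le> a j * y + b j" using a_pos[OF j] by (intro trans_le_add1) simp
    ultimately have "q j < a j * y + b j" "j < a j * y + b j" using y j by auto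
    then show ?thesis
      unfolding shift_factorization[OF j]
      using j B q_prime[OF j] q_ge[OF j] q_not_dvd[OF j, of j] e_pos prime[rule_format, OF j]
      by (intro h_frugal_mult_prime_power_prime_ge) auto
  qed
  then show ?thesis by blast
qed

end

theorem mainTheorem5:
  fixes B :: nat and k :: int
  assumes "B \<ge> 2" and "k \<ge> 0" and "dickson_conjecture"
  shows "\<forall>t::nat. t > 0 \<longrightarrow> (\<exists>N::nat. N > 0 \<and> (\<forall>i<t. k_frugal B k (N + i)))"
proof (intro allI impI)
  fix t :: nat
  obtain q where q_inj: "inj_on q {1..t}" and q: "\<forall>j\<in>{1..t}. prime (q j) \<and> t + B < q j"
    using ex_inj_on_primes_gt by blast
  define M where "M = (\<Sum>j\<in>{1..t}. fact_len B j + num_digits B (q j))"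
  define e where "e = B ^ (nat k + M + 1)"
  obtain N0 where "fact t ^ 2 dvd N0" "\<forall>j\<in>{1..t}. q j ^ e dvd N0 + j"
    using ex_fact_square_dvd_and_prime_powers_dvd_shifts[OF q_inj, of e] q by fastforce
  then interpret prime_power_shifts t e N0 q
    using q_inj q \<open>B \<ge> 2\<close> by unfold_locales (fastforce simp: e_def)+
  obtain y where y: "\<forall>j\<in>{1..t}. int e - int (fact_len B j) - int (num_digits B (q j))
                                  - int (num_digits B e) \<le> h_frugal B (N0 + K * y + j)"
    using ex_h_frugal_ge[OF \<open>dickson_conjecture\<close> \<open>B \<ge> 2\<close>] q by fastforce
  have "k \<le> h_frugal B (N0 + K * y + 1 + i)" if "i < t" for i
  proof -
    have "fact_len B (Suc i) + num_digits B (q (Suc i)) \<le> M"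
      unfolding M_def using that by (intro member_le_sum) auto
    moreover have "nat k + M + 1 + num_digits B e \<le> e + 1"
      unfolding e_def using \<open>B \<ge> 2\<close> by (rule num_digits_base_power_le)
    ultimately show ?thesis using y[rule_format, of "Suc i"] that \<open>k \<ge> 0\<close> by simp
  qed
  then show "\<exists>N>0. \<forall>i<t. k_frugal B k (N + i)"
    by (intro exI[of _ "N0 + K * y + 1"]) (simp add: k_frugal_def)
qed

end
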